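(* Let $G$ be a torsion-free abelian group, $R$ a $G$-graded ring, $I$ a finitely generated homogeneous ideal of $R$ and $M\in\mathcal{D}_{G\text{-gr}}(R)$. Then $M$ is derived gradedwise $I$-complete if and only if, for every $i\in\mathbb{Z}$, the discrete $G$-graded $R$-module $\pi_i(M)$, regarded as an object of $\mathcal{D}_{G\text{-gr}}(R)$, is derived gradedwise $I$-complete.
   Context: $\mathcal{D}_{G\text{-gr}}(\mathbb{Z}):=\mathrm{Fun}(G^{ds},\mathcal{D}(\mathbb{Z}))$ with Day convolution; $\mathcal{D}_{G\text{-gr}}(R):=\mathrm{Mod}_R(\mathcal{D}_{G\text{-gr}}(\mathbb{Z}))$; $\pi_i(M)=\bigoplus_g\pi_i(M_g)$ is the homotopy group for the $t$-structure in which $M$ is (co)connective iff each $M_g$ is, its heart being discrete $G$-graded $R$-modules. $M(h)_g=M_{g+h}$. For homogeneous $f\in R$, $T(M,f)$ is the limit in $\mathcal{D}_{G\text{-gr}}(R)$ of $\cdots\xrightarrow{f}M(-2\deg f)\xrightarrow{f}M(-\deg f)\xrightarrow{f}M$; $M$ is derived gradedwise $I$-complete if $T(M,f)=0$ for all homogeneous $f\in I$. *)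

theory Defs
  imports Main
begin

primrec gmul :: "nat \<Rightarrow> 'g::ab_group_add \<Rightarrow> 'g" where
  "gmul 0 x = 0"
| "gmul (Suc n) x = x + gmul n x"

definition torsion_free :: "'g::ab_group_add set \<Rightarrow> bool" where
  "torsion_free G \<longleftrightarrow> (\<forall>x\<in>G. \<forall>n::nat. n > 0 \<longrightarrow> gmul n x = 0 \<longrightarrow> x = 0)"

definition graded_ring :: "('g::ab_group_add \<Rightarrow> 'r::comm_ring_1 set) \<Rightarrow> bool" where
  "graded_ring Rg \<longleftrightarrow>
     (\<forall>g. 0 \<in> Rg g \<and> (\<forall>a\<in>Rg g. \<forall>b\<in>Rg g. a + b \<in> Rg g \<and> - a \<in> Rg g))
   \<and> 1 \<in> Rg 0
   \<and> (\<forall>g h a b. a \<in> Rg g \<longrightarrow> b \<in> Rg h \<longrightarrow> a * b \<in> Rg (g + h))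
   \<and> (\<forall>r. \<exists>!c. finite {g. c g \<noteq> 0} \<and> (\<forall>g. c g \<in> Rg g)
                 \<and> r = (\<Sum>g\<in>{g. c g \<noteq> 0}. c g))"

definition hcomp :: "('g::ab_group_add \<Rightarrow> 'r::comm_ring_1 set) \<Rightarrow> 'r \<Rightarrow> 'g \<Rightarrow> 'r" where
  "hcomp Rg r = (THE c. finite {g. c g \<noteq> 0} \<and> (\<forall>g. c g \<in> Rg g)
                        \<and> r = (\<Sum>g\<in>{g. c g \<noteq> 0}. c g))"

definition is_ideal :: "'r::comm_ring_1 set \<Rightarrow> bool" where
  "is_ideal I \<longleftrightarrow> 0 \<in> I \<and> (\<forall>a\<in>I. \<forall>b\<in>I. a + b \<in> I) \<and> (\<forall>r. \<forall>a\<in>I. r * a \<in> I)"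

definition homogeneous_ideal :: "('g::ab_group_add \<Rightarrow> 'r::comm_ring_1 set) \<Rightarrow> 'r set \<Rightarrow> bool" where
  "homogeneous_ideal Rg I \<longleftrightarrow> is_ideal I \<and> (\<forall>a\<in>I. \<forall>g. hcomp Rg a g \<in> I)"

definition finitely_generated_ideal :: "'r::comm_ring_1 set \<Rightarrow> bool" where
  "finitely_generated_ideal I \<longleftrightarrow>
     (\<exists>F. finite F \<and> I = {x. \<exists>c. x = (\<Sum>a\<in>F. c a * a)})"

text \<open>A complex of G-graded R-modules is given by its homogeneous pieces
  C k g (homological degree k, internal degree g), which are subgroups of an
  ambient abelian group 'm; differentials d k g : C k g \<rightarrow> C (k-1) g; and the
  action act r k g : C k g \<rightarrow> C k (g+h) of homogeneous ring elements r \<in> Rg h.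
  The graded module in homological degree k is the external direct sum of the C k g.\<close>

definition gr_complex ::
  "('g::ab_group_add \<Rightarrow> 'r::comm_ring_1 set) \<Rightarrow> (int \<Rightarrow> 'g \<Rightarrow> 'm::ab_group_add set)
   \<Rightarrow> (int \<Rightarrow> 'g \<Rightarrow> 'm \<Rightarrow> 'm) \<Rightarrow> ('r \<Rightarrow> int \<Rightarrow> 'g \<Rightarrow> 'm \<Rightarrow> 'm) \<Rightarrow> bool" where
  "gr_complex Rg C d act \<longleftrightarrow>
     (\<forall>k g. 0 \<in> C k g \<and> (\<forall>x\<in>C k g. \<forall>y\<in>C k g. x + y \<in> C k g \<and> - x \<in> C k g))
   \<and> (\<forall>k g. \<forall>x\<in>C k g. d k g x \<in> C (k - 1) g)
   \<and> (\<forall>k g. \<forall>x\<in>C k g. \<forall>y\<in>C k g. d k g (x + y) = d k g x + d k g y)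
   \<and> (\<forall>k g. \<forall>x\<in>C k g. d (k - 1) g (d k g x) = 0)
   \<and> (\<forall>h r k g. r \<in> Rg h \<longrightarrow> (\<forall>x\<in>C k g. act r k g x \<in> C k (g + h)))
   \<and> (\<forall>h r k g. r \<in> Rg h \<longrightarrow> (\<forall>x\<in>C k g. \<forall>y\<in>C k g.
         act r k g (x + y) = act r k g x + act r k g y))
   \<and> (\<forall>h r s k g. r \<in> Rg h \<longrightarrow> s \<in> Rg h \<longrightarrow> (\<forall>x\<in>C k g.
         act (r + s) k g x = act r k g x + act s k g x))
   \<and> (\<forall>k g. \<forall>x\<in>C k g. act 1 k g x = x)
   \<and> (\<forall>h h' r s k g. r \<in> Rg h \<longrightarrow> s \<in> Rg h' \<longrightarrow> (\<forall>x\<in>C k g.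
         act (r * s) k g x = act r k (g + h') (act s k g x)))
   \<and> (\<forall>h r k g. r \<in> Rg h \<longrightarrow> (\<forall>x\<in>C k g.
         d k (g + h) (act r k g x) = act r (k - 1) g (d k g x)))"

text \<open>For f homogeneous of degree e, the degree-g part of the tower
  ... \<rightarrow> M(-2e) \<rightarrow> M(-e) \<rightarrow> M is the tower of complexes X_n = C _ (g - n e) with
  transition maps multiplication by f : X_(n+1) \<rightarrow> X_n.  Its limit in the derived
  category is the fibre of  Phi : prod_n X_n \<rightarrow> prod_n X_n,  Phi(x)_n = x_n - f x_(n+1),
  modelled by the complex Fib_k = prod X^k \<oplus> prod X^(k+1) with differential
  D(x,y) = (d x, Phi x - d y).  T(M,f) = 0 iff this complex is acyclic for every g.\<close>

definition tow_deg :: "'g::ab_group_add \<Rightarrow> 'g \<Rightarrow> nat \<Rightarrow> 'g" where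
  "tow_deg g e n = g - gmul n e"

definition tow_Phi ::
  "('r \<Rightarrow> int \<Rightarrow> 'g::ab_group_add \<Rightarrow> 'm \<Rightarrow> 'm::ab_group_add) \<Rightarrow> 'r \<Rightarrow> 'g \<Rightarrow> 'g \<Rightarrow> int
   \<Rightarrow> (nat \<Rightarrow> 'm) \<Rightarrow> nat \<Rightarrow> 'm" where
  "tow_Phi act f e g k x n = x n - act f k (tow_deg g e (Suc n)) (x (Suc n))"

definition T_vanishes ::
  "(int \<Rightarrow> 'g::ab_group_add \<Rightarrow> 'm::ab_group_add set) \<Rightarrow> (int \<Rightarrow> 'g \<Rightarrow> 'm \<Rightarrow> 'm)
   \<Rightarrow> ('r \<Rightarrow> int \<Rightarrow> 'g \<Rightarrow> 'm \<Rightarrow> 'm) \<Rightarrow> 'g \<Rightarrow> 'r \<Rightarrow> bool" where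
  "T_vanishes C d act e f \<longleftrightarrow>
    (\<forall>g k x y.
       (\<forall>n. x n \<in> C k (tow_deg g e n)) \<and> (\<forall>n. y n \<in> C (k + 1) (tow_deg g e n))
     \<and> (\<forall>n. d k (tow_deg g e n) (x n) = 0)
     \<and> (\<forall>n. tow_Phi act f e g k x n = d (k + 1) (tow_deg g e n) (y n))
     \<longrightarrow> (\<exists>x' y'. (\<forall>n. x' n \<in> C (k + 1) (tow_deg g e n))
               \<and> (\<forall>n. y' n \<in> C (k + 2) (tow_deg g e n))
               \<and> (\<forall>n. x n = d (k + 1) (tow_deg g e n) (x' n))
               \<and> (\<forall>n. y n = tow_Phi act f e g (k + 1) x' n - d (k + 2) (tow_deg g e n) (y' n))))"

definition gr_complete ::
  "('g::ab_group_add \<Rightarrow> 'r::comm_ring_1 set) \<Rightarrow> 'r set \<Rightarrow> (int \<Rightarrow> 'g \<Rightarrow> 'm::ab_group_add set)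
   \<Rightarrow> (int \<Rightarrow> 'g \<Rightarrow> 'm \<Rightarrow> 'm) \<Rightarrow> ('r \<Rightarrow> int \<Rightarrow> 'g \<Rightarrow> 'm \<Rightarrow> 'm) \<Rightarrow> bool" where
  "gr_complete Rg I C d act \<longleftrightarrow> (\<forall>e f. f \<in> I \<longrightarrow> f \<in> Rg e \<longrightarrow> T_vanishes C d act e f)"

text \<open>The discrete graded module pi_i(M) = Z_i/B_i is represented (up to
  quasi-isomorphism) by the two-term complex  B_i \<hookrightarrow> Z_i  in homological degrees 1, 0.\<close>

definition cycles :: "(int \<Rightarrow> 'g \<Rightarrow> 'm::ab_group_add set) \<Rightarrow> (int \<Rightarrow> 'g \<Rightarrow> 'm \<Rightarrow> 'm) \<Rightarrow> int \<Rightarrow> 'g \<Rightarrow> 'm set" where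
  "cycles C d i g = {x \<in> C i g. d i g x = 0}"

definition boundaries :: "(int \<Rightarrow> 'g \<Rightarrow> 'm::ab_group_add set) \<Rightarrow> (int \<Rightarrow> 'g \<Rightarrow> 'm \<Rightarrow> 'm) \<Rightarrow> int \<Rightarrow> 'g \<Rightarrow> 'm set" where
  "boundaries C d i g = d (i + 1) g ` C (i + 1) g"

definition pi_C :: "(int \<Rightarrow> 'g \<Rightarrow> 'm::ab_group_add set) \<Rightarrow> (int \<Rightarrow> 'g \<Rightarrow> 'm \<Rightarrow> 'm) \<Rightarrow> int
                     \<Rightarrow> int \<Rightarrow> 'g \<Rightarrow> 'm set" where
  "pi_C C d i k g = (if k = 1 then boundaries C d i g else if k = 0 then cycles C d i g else {0})"

definition pi_d :: "int \<Rightarrow> 'g \<Rightarrow> 'm::ab_group_add \<Rightarrow> 'm" where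
  "pi_d k g x = (if k = 1 then x else 0)"

definition pi_act :: "('r \<Rightarrow> int \<Rightarrow> 'g \<Rightarrow> 'm \<Rightarrow> 'm::ab_group_add) \<Rightarrow> int \<Rightarrow> 'r \<Rightarrow> int \<Rightarrow> 'g \<Rightarrow> 'm \<Rightarrow> 'm" where
  "pi_act act i r k g x = (if k = 0 \<or> k = 1 then act r i g x else 0)"

end

(* For f homogeneous of degree e, the degree-g part of T(M,f) is the fibre of Phi = 1 - f on the
   product P = prod_n M_(g - n e), so it vanishes iff Phi induces an isomorphism on every H_k(P).
   Products of abelian groups are exact, hence H_k(P) = prod_n pi_k(M)_(g - n e) with Phi acting
   through f.  The two-term complex representing pi_i(M) has homology pi_i(M) in degree 0 and
   nothing else, so the condition for pi_i(M) is the degree-i condition for M. *)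
theory Submission
  imports Defs "HOL-Library.Function_Algebras"
begin

lemma additive_diff:
  fixes h :: "'a::ab_group_add \<Rightarrow> 'b::ab_group_add"
  assumes add_mem: "\<And>x y. x \<in> S \<Longrightarrow> y \<in> S \<Longrightarrow> x + y \<in> S"
    and uminus_mem: "\<And>x. x \<in> S \<Longrightarrow> - x \<in> S"
    and h_add: "\<And>x y. x \<in> S \<Longrightarrow> y \<in> S \<Longrightarrow> h (x + y) = h x + h y"
    and x: "x \<in> S" and y: "y \<in> S"
  shows "h (x - y) = h x - h y"
proof -
  have "0 \<in> S"
    using add_mem[OF y uminus_mem[OF y]] by simp
  then have "h 0 = 0"
    using h_add[of 0 0] by simp
  then have "- h y = h (- y)"
    using h_add[OF y uminus_mem[OF y]] by (simp add: minus_unique)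
  then show ?thesis
    using h_add[OF x uminus_mem[OF y]] by simp
qed

definition chain_cycles ::
  "(int \<Rightarrow> 'a::ab_group_add set) \<Rightarrow> (int \<Rightarrow> 'a \<Rightarrow> 'a) \<Rightarrow> int \<Rightarrow> 'a set"
  where "chain_cycles A \<delta> k = {x \<in> A k. \<delta> k x = 0}"

definition chain_boundaries ::
  "(int \<Rightarrow> 'a::ab_group_add set) \<Rightarrow> (int \<Rightarrow> 'a \<Rightarrow> 'a) \<Rightarrow> int \<Rightarrow> 'a set"
  where "chain_boundaries A \<delta> k = \<delta> (k + 1) ` A (k + 1)"

definition homology_inj ::
  "(int \<Rightarrow> 'a::ab_group_add set) \<Rightarrow> (int \<Rightarrow> 'a \<Rightarrow> 'a) \<Rightarrow> (int \<Rightarrow> 'a \<Rightarrow> 'a) \<Rightarrow> int \<Rightarrow> bool"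
  where "homology_inj A \<delta> \<phi> k \<longleftrightarrow>
    (\<forall>x\<in>chain_cycles A \<delta> k. \<phi> k x \<in> chain_boundaries A \<delta> k \<longrightarrow> x \<in> chain_boundaries A \<delta> k)"

definition homology_surj ::
  "(int \<Rightarrow> 'a::ab_group_add set) \<Rightarrow> (int \<Rightarrow> 'a \<Rightarrow> 'a) \<Rightarrow> (int \<Rightarrow> 'a \<Rightarrow> 'a) \<Rightarrow> int \<Rightarrow> bool"
  where "homology_surj A \<delta> \<phi> k \<longleftrightarrow>
    (\<forall>z\<in>chain_cycles A \<delta> k. \<exists>x\<in>chain_cycles A \<delta> k. z - \<phi> k x \<in> chain_boundaries A \<delta> k)"

text \<open>Acyclicity of the fibre of \<open>\<phi>\<close>: the complex \<open>A k \<oplus> A (k + 1)\<close> with differential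
  \<open>(x, y) \<mapsto> (\<delta> x, \<phi> x - \<delta> y)\<close>, as in \<open>T_vanishes\<close>.\<close>

definition fibre_acyclic ::
  "(int \<Rightarrow> 'a::ab_group_add set) \<Rightarrow> (int \<Rightarrow> 'a \<Rightarrow> 'a) \<Rightarrow> (int \<Rightarrow> 'a \<Rightarrow> 'a) \<Rightarrow> bool"
  where "fibre_acyclic A \<delta> \<phi> \<longleftrightarrow>
    (\<forall>k x y. x \<in> A k \<and> y \<in> A (k + 1) \<and> \<delta> k x = 0 \<and> \<phi> k x = \<delta> (k + 1) y \<longrightarrow>
       (\<exists>x' y'. x' \<in> A (k + 1) \<and> y' \<in> A (k + 2)
          \<and> x = \<delta> (k + 1) x' \<and> y = \<phi> (k + 1) x' - \<delta> (k + 2) y'))"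

locale chain_endo =
  fixes A :: "int \<Rightarrow> 'a::ab_group_add set"
    and \<delta> :: "int \<Rightarrow> 'a \<Rightarrow> 'a"
    and \<phi> :: "int \<Rightarrow> 'a \<Rightarrow> 'a"
  assumes zero_mem: "0 \<in> A k"
    and add_mem: "x \<in> A k \<Longrightarrow> y \<in> A k \<Longrightarrow> x + y \<in> A k"
    and uminus_mem: "x \<in> A k \<Longrightarrow> - x \<in> A k"
    and \<delta>_mem: "x \<in> A k \<Longrightarrow> \<delta> k x \<in> A (k - 1)"
    and \<delta>_add: "x \<in> A k \<Longrightarrow> y \<in> A k \<Longrightarrow> \<delta> k (x + y) = \<delta> k x + \<delta> k y"
    and \<phi>_mem: "x \<in> A k \<Longrightarrow> \<phi> k x \<in> A k"
    and \<phi>_add: "x \<in> A k \<Longrightarrow> y \<in> A k \<Longrightarrow> \<phi> k (x + y) = \<phi> k x + \<phi> k y"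
    and \<delta>_\<phi>: "x \<in> A k \<Longrightarrow> \<delta> k (\<phi> k x) = \<phi> (k - 1) (\<delta> k x)"
begin

lemma diff_mem: "x \<in> A k \<Longrightarrow> y \<in> A k \<Longrightarrow> x - y \<in> A k"
  using add_mem uminus_mem by (metis diff_conv_add_uminus)

lemma \<delta>_zero: "\<delta> k 0 = 0"
  using \<delta>_add[OF zero_mem zero_mem, of k] by simp

lemma \<phi>_zero: "\<phi> k 0 = 0"
  using \<phi>_add[OF zero_mem zero_mem, of k] by simp

lemma \<delta>_diff: "x \<in> A k \<Longrightarrow> y \<in> A k \<Longrightarrow> \<delta> k (x - y) = \<delta> k x - \<delta> k y"
  using additive_diff[where S = "A k" and h = "\<delta> k", OF add_mem uminus_mem \<delta>_add] .

lemma \<delta>_uminus: "x \<in> A k \<Longrightarrow> \<delta> k (- x) = - \<delta> k x"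
  using \<delta>_diff[OF zero_mem] by (simp add: \<delta>_zero)

lemma zero_in_chain_boundaries: "0 \<in> chain_boundaries A \<delta> k"
  unfolding chain_boundaries_def using zero_mem \<delta>_zero by (metis image_eqI)

lemma fibre_acyclic_imp_homology_inj:
  assumes "fibre_acyclic A \<delta> \<phi>"
  shows "homology_inj A \<delta> \<phi> k"
  unfolding homology_inj_def
proof (intro ballI impI)
  fix x assume "x \<in> chain_cycles A \<delta> k" and "\<phi> k x \<in> chain_boundaries A \<delta> k"
  then obtain y where "x \<in> A k" "\<delta> k x = 0" "y \<in> A (k + 1)" "\<phi> k x = \<delta> (k + 1) y"
    unfolding chain_cycles_def chain_boundaries_def by blast
  with assms obtain x' where "x' \<in> A (k + 1)" "x = \<delta> (k + 1) x'"
    unfolding fibre_acyclic_def by blast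
  then show "x \<in> chain_boundaries A \<delta> k"
    unfolding chain_boundaries_def by blast
qed

lemma fibre_acyclic_imp_homology_surj:
  assumes "fibre_acyclic A \<delta> \<phi>"
  shows "homology_surj A \<delta> \<phi> k"
  unfolding homology_surj_def
proof
  fix z assume "z \<in> chain_cycles A \<delta> k"
  then have z: "z \<in> A (k - 1 + 1)" "\<phi> (k - 1) 0 = \<delta> (k - 1 + 1) z"
    by (simp_all add: chain_cycles_def \<phi>_zero)
  \<comment> \<open>the fibre cycle \<open>(0, z)\<close> in degree \<open>k - 1\<close> bounds\<close>
  obtain x y where "x \<in> A (k - 1 + 1)" "0 = \<delta> (k - 1 + 1) x"
    and "y \<in> A (k - 1 + 2)" "z = \<phi> (k - 1 + 1) x - \<delta> (k - 1 + 2) y"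
    using assms zero_mem[of "k - 1"] \<delta>_zero z unfolding fibre_acyclic_def by blast
  then have x: "x \<in> A k" "\<delta> k x = 0" and y: "y \<in> A (k + 1)" "z = \<phi> k x - \<delta> (k + 1) y"
    by (simp_all add: add.commute add.left_commute)
  have "z - \<phi> k x = \<delta> (k + 1) (- y)"
    using y by (simp add: \<delta>_uminus)
  with x y show "\<exists>x\<in>chain_cycles A \<delta> k. z - \<phi> k x \<in> chain_boundaries A \<delta> k"
    unfolding chain_cycles_def chain_boundaries_def using uminus_mem by blast
qed

lemma homology_bij_imp_fibre_acyclic:
  assumes inj: "\<And>k. homology_inj A \<delta> \<phi> k" and surj: "\<And>k. homology_surj A \<delta> \<phi> k"
  shows "fibre_acyclic A \<delta> \<phi>"
  unfolding fibre_acyclic_def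
proof (intro allI impI, elim conjE)
  fix k x y
  assume x: "x \<in> A k" "\<delta> k x = 0" and y: "y \<in> A (k + 1)" "\<phi> k x = \<delta> (k + 1) y"
  then obtain u where u: "u \<in> A (k + 1)" "x = \<delta> (k + 1) u"
    using inj[of k] unfolding homology_inj_def chain_cycles_def chain_boundaries_def by blast
  define w where "w = y - \<phi> (k + 1) u"
  have w: "w \<in> A (k + 1)"
    unfolding w_def using y(1) u(1) by (simp add: diff_mem \<phi>_mem)
  have "\<delta> (k + 1) w = \<phi> k x - \<phi> k (\<delta> (k + 1) u)"
    unfolding w_def using y u(1) by (simp add: \<delta>_diff \<phi>_mem \<delta>_\<phi>)
  then have "w \<in> chain_cycles A \<delta> (k + 1)"
    using w u(2) by (simp add: chain_cycles_def)
  then obtain v b where v: "v \<in> A (k + 1)" "\<delta> (k + 1) v = 0"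
    and b: "b \<in> A (k + 2)" "w - \<phi> (k + 1) v = \<delta> (k + 2) b"
    using surj[of "k + 1"] unfolding homology_surj_def chain_cycles_def chain_boundaries_def
    by (auto simp: add.assoc)
  show "\<exists>x' y'. x' \<in> A (k + 1) \<and> y' \<in> A (k + 2)
          \<and> x = \<delta> (k + 1) x' \<and> y = \<phi> (k + 1) x' - \<delta> (k + 2) y'"
  proof (intro exI conjI)
    show "x = \<delta> (k + 1) (u + v)"
      using u v by (simp add: \<delta>_add)
    show "y = \<phi> (k + 1) (u + v) - \<delta> (k + 2) (- b)"
      using u(1) v(1) b by (simp add: \<phi>_add \<delta>_uminus w_def algebra_simps)
  qed (use u v b in \<open>simp_all add: add_mem uminus_mem\<close>)
qed

theorem fibre_acyclic_iff_homology_bij: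
  "fibre_acyclic A \<delta> \<phi> \<longleftrightarrow> (\<forall>k. homology_inj A \<delta> \<phi> k \<and> homology_surj A \<delta> \<phi> k)"
  using fibre_acyclic_imp_homology_inj fibre_acyclic_imp_homology_surj
    homology_bij_imp_fibre_acyclic by blast

lemma homology_bij_if_cycles_trivial:
  assumes "chain_cycles A \<delta> k \<subseteq> {0}"
  shows "homology_inj A \<delta> \<phi> k \<and> homology_surj A \<delta> \<phi> k"
proof -
  have "0 \<in> chain_cycles A \<delta> k"
    by (simp add: chain_cycles_def zero_mem \<delta>_zero)
  moreover have "z - \<phi> k 0 \<in> chain_boundaries A \<delta> k" if "z \<in> chain_cycles A \<delta> k" for z
    using that assms zero_in_chain_boundaries by (auto simp: \<phi>_zero)
  ultimately show ?thesis
    using assms zero_in_chain_boundaries unfolding homology_inj_def homology_surj_def by blast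
qed

end

definition tower_carrier ::
  "(int \<Rightarrow> 'g::ab_group_add \<Rightarrow> 'm set) \<Rightarrow> 'g \<Rightarrow> 'g \<Rightarrow> int \<Rightarrow> (nat \<Rightarrow> 'm) set"
  where "tower_carrier C e g k = {x. \<forall>n. x n \<in> C k (tow_deg g e n)}"

definition tower_diff ::
  "(int \<Rightarrow> 'g::ab_group_add \<Rightarrow> 'm \<Rightarrow> 'm) \<Rightarrow> 'g \<Rightarrow> 'g \<Rightarrow> int \<Rightarrow> (nat \<Rightarrow> 'm) \<Rightarrow> nat \<Rightarrow> 'm"
  where "tower_diff d e g k x = (\<lambda>n. d k (tow_deg g e n) (x n))"

lemma tow_deg_Suc: "tow_deg g e (Suc n) + e = tow_deg g e n"
  by (simp add: tow_deg_def algebra_simps)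

lemma T_vanishes_iff_fibre_acyclic:
  "T_vanishes C d act e f \<longleftrightarrow>
     (\<forall>g. fibre_acyclic (tower_carrier C e g) (tower_diff d e g) (tow_Phi act f e g))"
  unfolding T_vanishes_def fibre_acyclic_def tower_carrier_def tower_diff_def
  by (simp add: fun_eq_iff)

lemma tower_cycles:
  "chain_cycles (tower_carrier C e g) (tower_diff d e g) k = tower_carrier (cycles C d) e g k"
  by (auto simp: chain_cycles_def tower_carrier_def tower_diff_def cycles_def fun_eq_iff)

lemma tower_boundaries:
  "chain_boundaries (tower_carrier C e g) (tower_diff d e g) k = tower_carrier (boundaries C d) e g k"
proof (intro set_eqI iffI)
  fix x assume "x \<in> chain_boundaries (tower_carrier C e g) (tower_diff d e g) k"
  then show "x \<in> tower_carrier (boundaries C d) e g k"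
    by (auto simp: chain_boundaries_def tower_carrier_def tower_diff_def boundaries_def)
next
  fix x assume "x \<in> tower_carrier (boundaries C d) e g k"
  then have "\<forall>n. \<exists>u. u \<in> C (k + 1) (tow_deg g e n) \<and> x n = d (k + 1) (tow_deg g e n) u"
    by (auto simp: tower_carrier_def boundaries_def)
  then obtain u
    where "\<forall>n. u n \<in> C (k + 1) (tow_deg g e n) \<and> x n = d (k + 1) (tow_deg g e n) (u n)"
    by metis
  then have "u \<in> tower_carrier C e g (k + 1)" "x = tower_diff d e g (k + 1) u"
    by (auto simp: tower_carrier_def tower_diff_def)
  then show "x \<in> chain_boundaries (tower_carrier C e g) (tower_diff d e g) k"
    unfolding chain_boundaries_def by blast
qed

definition tow_Phi_homology_iso ::
  "(int \<Rightarrow> 'g::ab_group_add \<Rightarrow> 'm::ab_group_add set) \<Rightarrow> (int \<Rightarrow> 'g \<Rightarrow> 'm \<Rightarrow> 'm)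
   \<Rightarrow> ('r \<Rightarrow> int \<Rightarrow> 'g \<Rightarrow> 'm \<Rightarrow> 'm) \<Rightarrow> 'g \<Rightarrow> 'r \<Rightarrow> 'g \<Rightarrow> int \<Rightarrow> bool"
  where "tow_Phi_homology_iso C d act e f g k \<longleftrightarrow>
    homology_inj (tower_carrier C e g) (tower_diff d e g) (tow_Phi act f e g) k
    \<and> homology_surj (tower_carrier C e g) (tower_diff d e g) (tow_Phi act f e g) k"

lemma boundaries_pi_C_zero: "boundaries (pi_C C d i) pi_d 0 g = boundaries C d i g"
  by (simp add: boundaries_def pi_C_def pi_d_def)

lemma tow_Phi_pi_act_zero: "tow_Phi (pi_act act i) f e g 0 = tow_Phi act f e g i"
  by (simp add: fun_eq_iff tow_Phi_def pi_act_def)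

locale graded_complex =
  fixes Rg :: "'g::ab_group_add \<Rightarrow> 'r::comm_ring_1 set"
    and C :: "int \<Rightarrow> 'g \<Rightarrow> 'm::ab_group_add set"
    and d :: "int \<Rightarrow> 'g \<Rightarrow> 'm \<Rightarrow> 'm"
    and act :: "'r \<Rightarrow> int \<Rightarrow> 'g \<Rightarrow> 'm \<Rightarrow> 'm"
  assumes gr_complex: "gr_complex Rg C d act"
begin

lemma zero_mem: "0 \<in> C k g"
  and add_mem: "x \<in> C k g \<Longrightarrow> y \<in> C k g \<Longrightarrow> x + y \<in> C k g"
  and uminus_mem: "x \<in> C k g \<Longrightarrow> - x \<in> C k g"
  and d_mem: "x \<in> C k g \<Longrightarrow> d k g x \<in> C (k - 1) g"
  and d_add: "x \<in> C k g \<Longrightarrow> y \<in> C k g \<Longrightarrow> d k g (x + y) = d k g x + d k g y"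
  and d_d: "x \<in> C k g \<Longrightarrow> d (k - 1) g (d k g x) = 0"
  and act_mem: "r \<in> Rg h \<Longrightarrow> x \<in> C k g \<Longrightarrow> act r k g x \<in> C k (g + h)"
  and act_add: "r \<in> Rg h \<Longrightarrow> x \<in> C k g \<Longrightarrow> y \<in> C k g \<Longrightarrow>
    act r k g (x + y) = act r k g x + act r k g y"
  and act_one: "x \<in> C k g \<Longrightarrow> act 1 k g x = x"
  and act_plus: "r \<in> Rg h \<Longrightarrow> s \<in> Rg h \<Longrightarrow> x \<in> C k g \<Longrightarrow>
    act (r + s) k g x = act r k g x + act s k g x"
  and act_mult: "r \<in> Rg h \<Longrightarrow> s \<in> Rg h' \<Longrightarrow> x \<in> C k g \<Longrightarrow>
    act (r * s) k g x = act r k (g + h') (act s k g x)"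
  and d_act: "r \<in> Rg h \<Longrightarrow> x \<in> C k g \<Longrightarrow>
    d k (g + h) (act r k g x) = act r (k - 1) g (d k g x)"
  using gr_complex unfolding gr_complex_def by simp_all

lemma diff_mem: "x \<in> C k g \<Longrightarrow> y \<in> C k g \<Longrightarrow> x - y \<in> C k g"
  using add_mem uminus_mem by (metis diff_conv_add_uminus)

lemma d_diff: "x \<in> C k g \<Longrightarrow> y \<in> C k g \<Longrightarrow> d k g (x - y) = d k g x - d k g y"
  using additive_diff[where S = "C k g" and h = "d k g", OF add_mem uminus_mem d_add] .

lemma d_zero: "d k g 0 = 0"
  using d_add[OF zero_mem zero_mem] by simp

lemma act_zero: "r \<in> Rg h \<Longrightarrow> act r k g 0 = 0"
  using act_add[OF _ zero_mem zero_mem] by simp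

lemma tower_chain_endo:
  assumes f: "f \<in> Rg e"
  shows "chain_endo (tower_carrier C e g) (tower_diff d e g) (tow_Phi act f e g)"
proof -
  have act_mem': "x \<in> C k (tow_deg g e (Suc n)) \<Longrightarrow>
      act f k (tow_deg g e (Suc n)) x \<in> C k (tow_deg g e n)"
    and d_act': "x \<in> C k (tow_deg g e (Suc n)) \<Longrightarrow>
      d k (tow_deg g e n) (act f k (tow_deg g e (Suc n)) x)
        = act f (k - 1) (tow_deg g e (Suc n)) (d k (tow_deg g e (Suc n)) x)"
    for k n x
    using act_mem[OF f] d_act[OF f] tow_deg_Suc[of g e n] by metis+
  show ?thesis
  proof unfold_locales
    show "0 \<in> tower_carrier C e g k" for k
      using zero_mem by (simp add: tower_carrier_def)
    show "x + y \<in> tower_carrier C e g k"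
      if "x \<in> tower_carrier C e g k" "y \<in> tower_carrier C e g k" for x y k
      using add_mem that by (simp add: tower_carrier_def)
    show "- x \<in> tower_carrier C e g k" if "x \<in> tower_carrier C e g k" for x k
      using uminus_mem that by (simp add: tower_carrier_def)
    show "tower_diff d e g k x \<in> tower_carrier C e g (k - 1)" if "x \<in> tower_carrier C e g k" for x k
      using d_mem that by (simp add: tower_carrier_def tower_diff_def)
    show "tower_diff d e g k (x + y) = tower_diff d e g k x + tower_diff d e g k y"
      if "x \<in> tower_carrier C e g k" "y \<in> tower_carrier C e g k" for x y k
      using d_add that by (simp add: tower_carrier_def tower_diff_def fun_eq_iff)
    show "tow_Phi act f e g k x \<in> tower_carrier C e g k" if "x \<in> tower_carrier C e g k" for x k
      using that diff_mem act_mem' unfolding tower_carrier_def tow_Phi_def by blast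
    show "tow_Phi act f e g k (x + y) = tow_Phi act f e g k x + tow_Phi act f e g k y"
      if "x \<in> tower_carrier C e g k" "y \<in> tower_carrier C e g k" for x y k
      using act_add[OF f] that by (simp add: tower_carrier_def tow_Phi_def fun_eq_iff)
    show "tower_diff d e g k (tow_Phi act f e g k x)
        = tow_Phi act f e g (k - 1) (tower_diff d e g k x)"
      if "x \<in> tower_carrier C e g k" for x k
      using that by (simp add: tower_carrier_def tower_diff_def tow_Phi_def fun_eq_iff d_diff act_mem' d_act')
  qed
qed

lemma gr_complete_iff_tow_Phi_homology_iso:
  "gr_complete Rg I C d act \<longleftrightarrow>
     (\<forall>e f. f \<in> I \<longrightarrow> f \<in> Rg e \<longrightarrow> (\<forall>g k. tow_Phi_homology_iso C d act e f g k))"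
  unfolding gr_complete_def T_vanishes_iff_fibre_acyclic tow_Phi_homology_iso_def
  using chain_endo.fibre_acyclic_iff_homology_bij[OF tower_chain_endo] by blast

lemma cycles_add: "x \<in> cycles C d k g \<Longrightarrow> y \<in> cycles C d k g \<Longrightarrow> x + y \<in> cycles C d k g"
  and cycles_uminus: "x \<in> cycles C d k g \<Longrightarrow> - x \<in> cycles C d k g"
  unfolding cycles_def using add_mem uminus_mem d_add d_diff[OF zero_mem] by (auto simp: d_zero)

lemma boundaries_add:
  assumes "x \<in> boundaries C d k g" and "y \<in> boundaries C d k g"
  shows "x + y \<in> boundaries C d k g"
proof -
  obtain u v where "u \<in> C (k + 1) g" "v \<in> C (k + 1) g" "x = d (k + 1) g u" "y = d (k + 1) g v"
    using assms unfolding boundaries_def by blast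
  then have "u + v \<in> C (k + 1) g" "x + y = d (k + 1) g (u + v)"
    by (simp_all add: add_mem d_add)
  then show ?thesis
    unfolding boundaries_def by blast
qed

lemma boundaries_uminus:
  assumes "x \<in> boundaries C d k g"
  shows "- x \<in> boundaries C d k g"
proof -
  obtain u where "u \<in> C (k + 1) g" "x = d (k + 1) g u"
    using assms unfolding boundaries_def by blast
  then have "- u \<in> C (k + 1) g" "- x = d (k + 1) g (- u)"
    using d_diff[OF zero_mem] by (simp_all add: uminus_mem d_zero)
  then show ?thesis
    unfolding boundaries_def by blast
qed

lemma boundaries_subset_cycles: "boundaries C d k g \<subseteq> cycles C d k g"
  unfolding boundaries_def cycles_def using d_mem d_d by fastforce

lemma act_cycles: "r \<in> Rg h \<Longrightarrow> x \<in> cycles C d k g \<Longrightarrow> act r k g x \<in> cycles C d k (g + h)"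
  unfolding cycles_def using act_mem d_act act_zero by simp

lemma act_boundaries:
  "r \<in> Rg h \<Longrightarrow> x \<in> boundaries C d k g \<Longrightarrow> act r k g x \<in> boundaries C d k (g + h)"
  unfolding boundaries_def using act_mem d_act by (force simp: image_iff)

lemma pi_C_memD: "x \<in> pi_C C d i k g \<Longrightarrow> x \<in> C i g"
  using boundaries_subset_cycles by (auto simp: pi_C_def cycles_def zero_mem split: if_splits)

lemma zero_in_cycles: "0 \<in> cycles C d k g"
  by (simp add: cycles_def zero_mem d_zero)

lemma zero_in_boundaries: "0 \<in> boundaries C d k g"
  unfolding boundaries_def using zero_mem d_zero by (metis image_eqI)

lemma zero_in_pi_C: "0 \<in> pi_C C d i k g"
  by (simp add: pi_C_def zero_in_cycles zero_in_boundaries)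

lemma pi_C_other: "k \<noteq> 0 \<Longrightarrow> k \<noteq> 1 \<Longrightarrow> pi_C C d i k g = {0}"
  by (simp add: pi_C_def)

lemma pi_C_add: "x \<in> pi_C C d i k g \<Longrightarrow> y \<in> pi_C C d i k g \<Longrightarrow> x + y \<in> pi_C C d i k g"
  and pi_C_uminus: "x \<in> pi_C C d i k g \<Longrightarrow> - x \<in> pi_C C d i k g"
  by (auto simp: pi_C_def cycles_add cycles_uminus boundaries_add boundaries_uminus)

lemma pi_d_mem: "x \<in> pi_C C d i k g \<Longrightarrow> pi_d k g x \<in> pi_C C d i (k - 1) g"
  using boundaries_subset_cycles
  by (auto simp: pi_C_def pi_d_def zero_in_cycles zero_in_boundaries subset_iff)

lemma pi_act_mem:
  "r \<in> Rg h \<Longrightarrow> x \<in> pi_C C d i k g \<Longrightarrow> pi_act act i r k g x \<in> pi_C C d i k (g + h)"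
  using act_cycles act_boundaries zero_in_pi_C by (auto simp: pi_C_def pi_act_def)

lemma gr_complex_pi: "gr_complex Rg (pi_C C d i) pi_d (pi_act act i)"
  unfolding gr_complex_def
  using zero_in_pi_C pi_C_add pi_C_uminus pi_d_mem pi_act_mem
  by (auto simp: pi_d_def pi_act_def pi_C_memD pi_C_other act_add act_plus
      act_one act_mult d_act act_zero)

lemma cycles_pi_C: "cycles (pi_C C d i) pi_d k g = (if k = 0 then cycles C d i g else {0})"
  using zero_in_boundaries by (auto simp: cycles_def pi_C_def pi_d_def)

lemma tow_Phi_homology_iso_pi:
  assumes f: "f \<in> Rg e"
  shows "(\<forall>k. tow_Phi_homology_iso (pi_C C d i) pi_d (pi_act act i) e f g k)
    \<longleftrightarrow> tow_Phi_homology_iso C d act e f g i"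
proof -
  interpret pi: graded_complex Rg "pi_C C d i" pi_d "pi_act act i"
    using gr_complex_pi by (rule graded_complex.intro)
  interpret pi_tower: chain_endo "tower_carrier (pi_C C d i) e g" "tower_diff pi_d e g"
      "tow_Phi (pi_act act i) f e g"
    using f by (rule pi.tower_chain_endo)
  have "chain_cycles (tower_carrier (pi_C C d i) e g) (tower_diff pi_d e g) k \<subseteq> {0}"
    if "k \<noteq> 0" for k
    using that by (auto simp: tower_cycles cycles_pi_C tower_carrier_def fun_eq_iff)
  then have "tow_Phi_homology_iso (pi_C C d i) pi_d (pi_act act i) e f g k" if "k \<noteq> 0" for k
    using that pi_tower.homology_bij_if_cycles_trivial unfolding tow_Phi_homology_iso_def by blast
  moreover have "tow_Phi_homology_iso (pi_C C d i) pi_d (pi_act act i) e f g 0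
      \<longleftrightarrow> tow_Phi_homology_iso C d act e f g i"
    by (simp add: tow_Phi_homology_iso_def homology_inj_def homology_surj_def tower_cycles
        tower_boundaries tower_carrier_def cycles_pi_C boundaries_pi_C_zero tow_Phi_pi_act_zero)
  ultimately show ?thesis
    by (metis (full_types))
qed

end

theorem lemma4p7:
  fixes Rg :: "'g::ab_group_add \<Rightarrow> 'r::comm_ring_1 set"
    and I :: "'r set"
    and C :: "int \<Rightarrow> 'g \<Rightarrow> 'm::ab_group_add set"
    and d :: "int \<Rightarrow> 'g \<Rightarrow> 'm \<Rightarrow> 'm"
    and act :: "'r \<Rightarrow> int \<Rightarrow> 'g \<Rightarrow> 'm \<Rightarrow> 'm"
  assumes "torsion_free (UNIV :: 'g set)"
    and "graded_ring Rg"
    and "homogeneous_ideal Rg I"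
    and "finitely_generated_ideal I"
    and "gr_complex Rg C d act"
  shows "gr_complete Rg I C d act \<longleftrightarrow>
         (\<forall>i::int. gr_complete Rg I (pi_C C d i) pi_d (pi_act act i))"
proof -
  interpret graded_complex Rg C d act
    using assms(5) by (rule graded_complex.intro)
  have pi_complete: "gr_complete Rg I (pi_C C d i) pi_d (pi_act act i) \<longleftrightarrow>
      (\<forall>e f. f \<in> I \<longrightarrow> f \<in> Rg e \<longrightarrow> (\<forall>g. tow_Phi_homology_iso C d act e f g i))" for i
  proof -
    interpret pi: graded_complex Rg "pi_C C d i" pi_d "pi_act act i"
      using gr_complex_pi by (rule graded_complex.intro)
    show ?thesis
      unfolding pi.gr_complete_iff_tow_Phi_homology_iso by (simp add: tow_Phi_homology_iso_pi)
  qed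
  show ?thesis
    unfolding gr_complete_iff_tow_Phi_homology_iso pi_complete by blast
qed

end
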